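(* $\mathrm{SL}(2,\mathbb{R})$ and $\mathrm{GL}(2,\mathbb{R})$ have the topological $R_\infty$-property.
   Context: For an automorphism $\varphi$ of a group $G$, the $\varphi$-twisted conjugacy classes are the equivalence classes of the relation $x\sim_\varphi y$ iff $y=gx\varphi(g)^{-1}$ for some $g\in G$; $R(\varphi)\in\mathbb{N}\cup\{\infty\}$ is their number. A topological group $G$ has the topological $R_\infty$-property if $R(\varphi)=\infty$ for every automorphism $\varphi$ of $G$ that is a homeomorphism (for a Lie group: every continuous automorphism). *)

theory Defs
  imports "HOL-Analysis.Analysis"
begin

text \<open>Real 2x2 matrices, with the Euclidean (subspace) topology of real^2^2.\<close>

definition SL2 :: "(real^2^2) set" where
  "SL2 = {A. det A = 1}"

definition GL2 :: "(real^2^2) set" where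
  "GL2 = {A. invertible A}"

definition top_automorphism :: "(real^2^2) set \<Rightarrow> (real^2^2 \<Rightarrow> real^2^2) \<Rightarrow> bool" where
  "top_automorphism G \<phi> \<longleftrightarrow>
     (\<forall>x\<in>G. \<forall>y\<in>G. \<phi> (x ** y) = \<phi> x ** \<phi> y) \<and>
     (\<exists>\<psi>. homeomorphism G G \<phi> \<psi>)"

definition twisted_rel :: "(real^2^2) set \<Rightarrow> (real^2^2 \<Rightarrow> real^2^2) \<Rightarrow> ((real^2^2) \<times> (real^2^2)) set" where
  "twisted_rel G \<phi> = {(x, y). x \<in> G \<and> y \<in> G \<and> (\<exists>g\<in>G. y = g ** x ** matrix_inv (\<phi> g))}"

definition R_infinite :: "(real^2^2) set \<Rightarrow> (real^2^2 \<Rightarrow> real^2^2) \<Rightarrow> bool" where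
  "R_infinite G \<phi> \<longleftrightarrow> infinite (G // twisted_rel G \<phi>)"

definition top_R_infty_property :: "(real^2^2) set \<Rightarrow> bool" where
  "top_R_infty_property G \<longleftrightarrow> (\<forall>\<phi>. top_automorphism G \<phi> \<longrightarrow> R_infinite G \<phi>)"

end

theory Submission
  imports Defs
begin

text \<open>Let \<open>\<phi>\<close> be a continuous automorphism of a group \<open>G\<close> with \<open>SL2 \<subseteq> G \<subseteq> GL2\<close>, and write
  \<open>u(t)\<close>, \<open>l(t)\<close> for the upper and lower unipotent matrices. Since \<open>u(1)\<close> is conjugate in \<open>SL2\<close> to
  \<open>u(1)\<^sup>4 = u(4)\<close>, \<open>\<phi>(u(1))\<close> is unipotent; with continuity this gives \<open>\<phi>(u(t)) = 1 + t A\<close>, and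
  conjugating by \<open>J\<close> gives \<open>\<phi>(l(t)) = 1 + t B\<close>, for nilpotent \<open>A\<close>, \<open>B\<close>. As \<open>J = u(1) l(-1) u(1)\<close>
  squares to the central element \<open>-1\<close>, which \<open>\<phi>\<close> fixes, \<open>trace (A B) = 1\<close>. Hence some \<open>P\<close>
  intertwines \<open>E12\<close>, \<open>E21\<close> with \<open>A\<close>, \<open>B\<close>, so \<open>\<phi>\<close> is conjugation by \<open>P\<close> on \<open>SL2\<close>, which the
  unipotents generate, and on all of \<open>G\<close> it is conjugation by \<open>P\<close> up to a scalar factor. For such
  \<open>\<phi>\<close> the function \<open>x \<mapsto> trace (x P)\<^sup>2 / det (x P)\<close> is constant on twisted conjugacy classes
  and takes infinitely many values on \<open>SL2\<close>.\<close>

section \<open>Matrix algebra\<close>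

lemma matrix_add_rdistrib: "(A + B) ** C = A ** C + B ** C"
  by (vector matrix_matrix_mult_def sum.distrib[symmetric] field_simps)

lemma matrix_diff_ldistrib:
  fixes A :: "'a::ring_1^'n^'m"
  shows "A ** (B - C) = A ** B - A ** C"
  by (vector matrix_matrix_mult_def sum_subtractf[symmetric] algebra_simps)

lemma matrix_diff_rdistrib:
  fixes A :: "'a::ring_1^'n^'m"
  shows "(A - B) ** C = A ** C - B ** C"
  by (vector matrix_matrix_mult_def sum_subtractf[symmetric] algebra_simps)

lemma matrix_neg_left:
  fixes A :: "'a::ring_1^'n^'m"
  shows "(- A) ** B = - (A ** B)"
  by (vector matrix_matrix_mult_def sum_negf[symmetric])

lemma matrix_neg_right:
  fixes A :: "'a::ring_1^'n^'m"
  shows "A ** (- B) = - (A ** B)"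
  by (vector matrix_matrix_mult_def sum_negf[symmetric])

lemma matrix_scaleR_left:
  fixes A :: "'a::real_algebra_1^'n^'m"
  shows "(k *\<^sub>R A) ** B = k *\<^sub>R (A ** B)"
  by (rule scalar_matrix_assoc[symmetric])

lemma matrix_scaleR_right:
  fixes A :: "'a::real_algebra_1^'n^'m"
  shows "A ** (k *\<^sub>R B) = k *\<^sub>R (A ** B)"
  by (simp add: matrix_scalar_ac scalar_matrix_assoc)

lemma trace_scaleR: "trace (k *\<^sub>R (A::real^'n^'n)) = k * trace A"
  by (simp add: trace_def sum_distrib_left)

lemma trace_uminus: "trace (- (A::'a::comm_ring_1^'n^'n)) = - trace A"
  by (simp add: trace_def sum_negf)

lemma
  fixes A :: "'a::semiring_1^'n^'n"
  assumes "invertible A"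
  shows matrix_inv_right: "A ** matrix_inv A = mat 1"
    and matrix_inv_left: "matrix_inv A ** A = mat 1"
  using someI_ex[OF assms[unfolded invertible_def]] by (simp_all add: matrix_inv_def)

lemma matrix_inv_unique:
  fixes A :: "'a::semiring_1^'n^'n"
  assumes "A ** B = mat 1" "B ** A = mat 1"
  shows "matrix_inv A = B"
proof -
  have "invertible A"
    using assms invertible_def by blast
  then have "matrix_inv A = matrix_inv A ** (A ** B)"
    using assms by simp
  also have "\<dots> = B"
    using matrix_inv_left[OF \<open>invertible A\<close>] by (simp add: matrix_mul_assoc)
  finally show ?thesis .
qed

lemma matrix_inv_mult:
  fixes A B :: "'a::semiring_1^'n^'n"
  assumes "invertible A" "invertible B"
  shows "matrix_inv (A ** B) = matrix_inv B ** matrix_inv A"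
proof (rule matrix_inv_unique)
  show "A ** B ** (matrix_inv B ** matrix_inv A) = mat 1"
    by (metis assms matrix_inv_right matrix_mul_assoc matrix_mul_rid)
  show "matrix_inv B ** matrix_inv A ** (A ** B) = mat 1"
    by (metis assms matrix_inv_left matrix_mul_assoc matrix_mul_rid)
qed

lemma matrix_inv_matrix_inv:
  fixes A :: "'a::semiring_1^'n^'n"
  assumes "invertible A"
  shows "matrix_inv (matrix_inv A) = A"
  using assms by (intro matrix_inv_unique) (simp_all add: matrix_inv_left matrix_inv_right)

lemma invertible_matrix_inv:
  fixes A :: "'a::semiring_1^'n^'n"
  assumes "invertible A"
  shows "invertible (matrix_inv A)"
  using assms invertible_def matrix_inv_left matrix_inv_right by blast

lemma matrix_inv_conj:
  fixes P g :: "'a::semiring_1^'n^'n"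
  assumes "invertible P" "invertible g"
  shows "matrix_inv (P ** g ** matrix_inv P) = P ** matrix_inv g ** matrix_inv P"
  using assms
  by (simp add: matrix_inv_mult invertible_mult invertible_matrix_inv matrix_inv_matrix_inv
      matrix_mul_assoc)

lemma matrix_inv_one: "matrix_inv (mat 1 :: 'a::semiring_1^'n^'n) = mat 1"
  by (rule matrix_inv_unique) simp_all

lemma matrix_inv_scaleR:
  fixes A :: "real^'n^'n"
  assumes "c \<noteq> 0" "invertible A"
  shows "matrix_inv (c *\<^sub>R A) = inverse c *\<^sub>R matrix_inv A"
  using assms
  by (intro matrix_inv_unique) (simp_all add: matrix_scaleR_left matrix_scaleR_right
      matrix_inv_left matrix_inv_right)

lemma det_matrix_inv:
  fixes A :: "'a::comm_ring_1^'n^'n"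
  assumes "invertible A"
  shows "det (matrix_inv A) * det A = 1"
  by (metis assms det_I det_mul matrix_inv_left)

lemma
  fixes g :: "'a::comm_ring_1^'n^'n"
  assumes "invertible g"
  shows det_conj: "det (g ** x ** matrix_inv g) = det x"
    and trace_conj: "trace (g ** x ** matrix_inv g) = trace x"
proof -
  have "det (g ** x ** matrix_inv g) = det x * (det (matrix_inv g) * det g)"
    by (simp add: det_mul ac_simps)
  then show "det (g ** x ** matrix_inv g) = det x"
    using det_matrix_inv[OF assms] by simp
  have "trace (g ** x ** matrix_inv g) = trace (matrix_inv g ** (g ** x))"
    by (rule trace_mul_sym)
  then show "trace (g ** x ** matrix_inv g) = trace x"
    using matrix_inv_left[OF assms] by (simp add: matrix_mul_assoc)
qed

lemma conj_one_plus_scaleR: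
  fixes g :: "real^'n^'n"
  assumes "invertible g"
  shows "g ** (mat 1 + s *\<^sub>R M) ** matrix_inv g = mat 1 + s *\<^sub>R (g ** M ** matrix_inv g)"
  using assms by (simp add: matrix_add_ldistrib matrix_add_rdistrib matrix_scaleR_left
      matrix_scaleR_right matrix_inv_right)

lemma one_plus_nilpotent_mult:
  fixes N :: "real^'n^'n"
  assumes "N ** N = 0"
  shows "(mat 1 + a *\<^sub>R N) ** (mat 1 + b *\<^sub>R N) = mat 1 + (a + b) *\<^sub>R N"
  using assms by (simp add: matrix_add_ldistrib matrix_add_rdistrib matrix_scaleR_left
      matrix_scaleR_right scaleR_add_left)

lemma matrix_inv_one_plus_nilpotent:
  fixes N :: "real^'n^'n"
  assumes "N ** N = 0"
  shows "matrix_inv (mat 1 + a *\<^sub>R N) = mat 1 + (- a) *\<^sub>R N"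
  using one_plus_nilpotent_mult[OF assms, of a "- a"] one_plus_nilpotent_mult[OF assms, of "- a" a]
  by (intro matrix_inv_unique) simp_all

lemma continuous_additive_eq_scale:
  fixes L :: "real \<Rightarrow> real"
  assumes add: "\<And>s t. L (s + t) = L s + L t" and "continuous_on UNIV L"
  shows "L t = t * L 1"
proof -
  have zero: "L 0 = 0"
    using add[of 0 0] by simp
  have minus: "L (- x) = - L x" for x
    using add[of x "- x"] zero by simp
  have of_nat: "L (of_nat n * x) = of_nat n * L x" for n x
    by (induction n) (simp_all add: zero distrib_right add)
  have of_int: "L (of_int k * x) = of_int k * L x" for k x
    using of_nat[of "nat \<bar>k\<bar>" x] minus[of "real (nat \<bar>k\<bar>) * x"]
    by (cases "k \<ge> 0") auto
  have "L q = q * L 1" if q: "q \<in> \<rat>" for q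
  proof -
    obtain a b where ab: "b > 0" "q = of_int a / of_int b"
      using Rats_cases'[OF q] by (metis of_int_0_less_iff)
    have "of_int b * L q = L (of_int b * q)"
      using of_int by simp
    also have "\<dots> = of_int a * L 1"
      using ab of_int[of a 1] by simp
    finally have "L q = of_int a / of_int b * L 1"
      using ab(1) by (simp add: field_simps)
    with ab(2) show ?thesis
      by simp
  qed
  then have "\<rat> \<subseteq> {x. L x = x * L 1}"
    by blast
  moreover have "closed {x. L x = x * L 1}"
    by (rule closed_Collect_eq) (auto intro!: continuous_intros assms(2))
  ultimately have "closure \<rat> \<subseteq> {x. L x = x * L 1}"
    by (rule closure_minimal)
  then show ?thesis
    using Rats_closure_real by auto
qed

section \<open>Real 2x2 matrices\<close>

definition mat22 :: "real \<Rightarrow> real \<Rightarrow> real \<Rightarrow> real \<Rightarrow> real^2^2" where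
  "mat22 a b c d = (\<chi> i j. if i = 1 then (if j = 1 then a else b) else (if j = 1 then c else d))"

lemma mat22_nth [simp]:
  "mat22 a b c d $ 1 $ 1 = a" "mat22 a b c d $ 1 $ 2 = b"
  "mat22 a b c d $ 2 $ 1 = c" "mat22 a b c d $ 2 $ 2 = d"
  by (simp_all add: mat22_def)

lemma matrix22_eq_iff:
  "(X::real^2^2) = Y \<longleftrightarrow> X$1$1 = Y$1$1 \<and> X$1$2 = Y$1$2 \<and> X$2$1 = Y$2$1 \<and> X$2$2 = Y$2$2"
  by (auto simp: vec_eq_iff forall_2)

lemma mat22_eq_iff [simp]:
  "mat22 a b c d = mat22 a' b' c' d' \<longleftrightarrow> a = a' \<and> b = b' \<and> c = c' \<and> d = d'"
  by (simp add: matrix22_eq_iff)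

lemma mat22_cases: obtains a b c d where "X = mat22 a b c d"
  by (metis (no_types) mat22_nth matrix22_eq_iff)

lemma mat22_mult [simp]:
  "mat22 a b c d ** mat22 e f g h = mat22 (a*e + b*g) (a*f + b*h) (c*e + d*g) (c*f + d*h)"
  by (simp add: matrix22_eq_iff matrix_matrix_mult_def sum_2)

lemma mat22_add [simp]: "mat22 a b c d + mat22 e f g h = mat22 (a+e) (b+f) (c+g) (d+h)"
  and mat22_diff [simp]: "mat22 a b c d - mat22 e f g h = mat22 (a-e) (b-f) (c-g) (d-h)"
  and mat22_uminus [simp]: "- mat22 a b c d = mat22 (-a) (-b) (-c) (-d)"
  and mat22_scaleR [simp]: "k *\<^sub>R mat22 a b c d = mat22 (k*a) (k*b) (k*c) (k*d)"
  by (simp_all add: matrix22_eq_iff)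

lemma mat22_one: "mat 1 = mat22 1 0 0 1"
  and mat22_zero: "0 = mat22 0 0 0 0"
  by (simp_all add: matrix22_eq_iff mat_def)

lemma det_mat22 [simp]: "det (mat22 a b c d) = a*d - b*c"
  by (simp add: det_2)

lemma trace_mat22 [simp]: "trace (mat22 a b c d) = a + d"
  by (simp add: trace_def sum_2)

lemma matrix_inv_mat22:
  assumes "a*d - b*c \<noteq> 0"
  shows "matrix_inv (mat22 a b c d) =
    mat22 (d/(a*d - b*c)) (-b/(a*d - b*c)) (-c/(a*d - b*c)) (a/(a*d - b*c))"
proof (rule matrix_inv_unique)
  let ?D = "a*d - b*c"
  show "mat22 a b c d ** mat22 (d/?D) (-b/?D) (-c/?D) (a/?D) = mat 1"
    unfolding mat22_mult mat22_one mat22_eq_iff using assms by (auto simp: divide_simps; argo)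
  show "mat22 (d/?D) (-b/?D) (-c/?D) (a/?D) ** mat22 a b c d = mat 1"
    unfolding mat22_mult mat22_one mat22_eq_iff using assms by (auto simp: divide_simps; argo)
qed

lemma det_scaleR_22: "det (k *\<^sub>R (X::real^2^2)) = k^2 * det X"
  by (cases X rule: mat22_cases) (simp add: algebra_simps power2_eq_square)

text \<open>For a 2x2 matrix this says that the characteristic polynomial is \<open>(X - 1)\<^sup>2\<close>.\<close>
definition unipotent :: "real^2^2 \<Rightarrow> bool" where
  "unipotent x \<longleftrightarrow> det x = 1 \<and> trace x = 2"

lemma unipotent_conj:
  assumes "invertible g"
  shows "unipotent (g ** x ** matrix_inv g) \<longleftrightarrow> unipotent x"
  using assms by (simp add: unipotent_def det_conj trace_conj)

lemma unipotent_iff_nilpotent: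
  "unipotent x \<longleftrightarrow> trace (x - mat 1) = 0 \<and> (x - mat 1) ** (x - mat 1) = 0"
proof (cases x rule: mat22_cases)
  case (1 a b c d)
  show ?thesis
  proof (cases "d = 2 - a")
    case True
    have "(a - 1) * b + b * (1 - a) = 0" "c * (a - 1) + (1 - a) * c = 0"
      by (simp_all add: algebra_simps)
    then show ?thesis
      by (simp add: 1 True unipotent_def mat22_one mat22_zero algebra_simps) linarith
  next
    case False
    then show ?thesis
      by (auto simp: 1 unipotent_def mat22_one)
  qed
qed

text \<open>Comparing determinants and traces gives \<open>det x = (det x)\<^sup>4\<close> and \<open>t = t\<^sup>4 - 4 t\<^sup>2 + 2\<close> for
  \<open>t = trace x\<close>, i.e. \<open>(t - 2) (t + 1) (t\<^sup>2 + t - 1) = 0\<close>. By Cayley-Hamilton, the roots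
  \<open>t = -1\<close> and \<open>t\<^sup>2 + t = 1\<close> force \<open>x\<^sup>3 = 1\<close> and \<open>x\<^sup>5 = 1\<close>, respectively.\<close>
lemma unipotent_if_conj_to_fourth_power:
  assumes "invertible x" "invertible g"
    and conj: "g ** x ** matrix_inv g = x ** x ** x ** x"
    and "x ** x ** x \<noteq> mat 1" "x ** x ** x ** x ** x \<noteq> mat 1"
  shows "unipotent x"
proof -
  obtain a b c d where x: "x = mat22 a b c d"
    by (rule mat22_cases)
  have "det x = det x ^ 4"
    using det_conj[OF assms(2), of x] by (simp add: conj det_mul power4_eq_xxxx)
  then have "det x * (det x - 1) * ((det x + 1/2)\<^sup>2 + 3/4) = 0"
    by algebra
  moreover have "(det x + 1/2)\<^sup>2 + 3/4 > 0"
    by (simp add: add_nonneg_pos)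
  ultimately have det: "a*d - b*c = 1"
    using assms(1) x by (simp add: invertible_det_nz)
  define t where "t = a + d"
  have "trace (x ** x ** x ** x) = trace x"
    using trace_conj[OF assms(2), of x] by (simp add: conj)
  then have "t = t^4 - 4*t^2 + 2"
    using det by (simp add: x t_def) algebra
  then have "(t - 2) * (t + 1) * (t^2 + t - 1) = 0"
    by algebra
  moreover have "t \<noteq> -1"
  proof
    assume "t = -1"
    then have "x ** x ** x = mat 1"
      using det by (simp add: x t_def mat22_one) algebra
    with assms(4) show False ..
  qed
  moreover have "t^2 + t - 1 \<noteq> 0"
  proof
    assume "t^2 + t - 1 = 0"
    then have "x ** x ** x ** x ** x = mat 1"
      using det by (simp add: x t_def mat22_one) algebra
    with assms(5) show False ..
  qed
  ultimately have "t = 2"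
    by simp
  then show ?thesis
    using det by (simp add: unipotent_def x t_def)
qed

lemma commuting_traceless_eq_scaleR:
  fixes A C :: "real^2^2"
  assumes "trace A = 0" "trace C = 0" "A \<noteq> 0" "C ** A = A ** C"
  shows "\<exists>l. C = l *\<^sub>R A"
proof -
  obtain p q r s where A: "A = mat22 p q r s" by (rule mat22_cases)
  obtain x y z w where C: "C = mat22 x y z w" by (rule mat22_cases)
  have s: "s = - p" and w: "w = - x"
    using assms(1,2) by (simp_all add: A C eq_neg_iff_add_eq_0)
  have h: "y * r = q * z" "q * x = p * y" "p * z = r * x"
    using assms(4) unfolding A C s w by simp_all
  have nz: "p \<noteq> 0 \<or> q \<noteq> 0 \<or> r \<noteq> 0"
    using assms(3) by (auto simp: A s mat22_zero)
  consider "q \<noteq> 0" | "q = 0" "r \<noteq> 0" | "q = 0" "r = 0" "p \<noteq> 0"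
    using nz by blast
  then show ?thesis
  proof cases
    case 1
    then have "C = (y/q) *\<^sub>R A"
      using h by (simp add: A C s w field_simps)
    then show ?thesis ..
  next
    case 2
    moreover have "y = 0"
      using h 2 by simp
    ultimately have "C = (z/r) *\<^sub>R A"
      using h by (simp add: A C s w field_simps)
    then show ?thesis ..
  next
    case 3
    moreover have "y = 0" "z = 0"
      using h 3 by (simp_all add: algebra_simps)
    ultimately have "C = (x/p) *\<^sub>R A"
      using h by (simp add: A C s w field_simps)
    then show ?thesis ..
  qed
qed

lemma unipotent_commuting_eq_one_plus_scaleR:
  assumes "unipotent C" "trace A = 0" "A \<noteq> 0" "C ** A = A ** C"
  shows "\<exists>l. C = mat 1 + l *\<^sub>R A"
proof -
  have "(C - mat 1) ** A = A ** (C - mat 1)"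
    using assms(4) by (simp add: matrix_diff_ldistrib matrix_diff_rdistrib)
  moreover have "trace (C - mat 1) = 0"
    using assms(1) unipotent_iff_nilpotent by blast
  ultimately obtain l where "C - mat 1 = l *\<^sub>R A"
    using commuting_traceless_eq_scaleR assms(2,3) by blast
  then show ?thesis
    by (metis add.commute diff_add_cancel)
qed

lemma traceless_if_square_eq_neg_one:
  assumes "(X::real^2^2) ** X = - mat 1"
  shows "trace X = 0"
proof (cases X rule: mat22_cases)
  case (1 a b c d)
  then have h: "a * a + b * c = -1" "b * (a + d) = 0" "c * (a + d) = 0"
    using assms by (simp_all add: mat22_one algebra_simps)
  show ?thesis
  proof (rule ccontr)
    assume "trace X \<noteq> 0"
    then have "b = 0" "c = 0"
      using h(2,3) by (simp_all add: 1)
    then show False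
      using h(1) by (metis add.right_neutral mult_zero_left not_square_less_zero neg_less_0_iff_less
          zero_less_one)
  qed
qed

definition E12 :: "real^2^2" where
  "E12 = mat22 0 1 0 0"

definition E21 :: "real^2^2" where
  "E21 = mat22 0 0 1 0"

definition upper_unip :: "real \<Rightarrow> real^2^2" where
  "upper_unip t = mat 1 + t *\<^sub>R E12"

definition lower_unip :: "real \<Rightarrow> real^2^2" where
  "lower_unip t = mat 1 + t *\<^sub>R E21"

lemma upper_unip_mat22: "upper_unip t = mat22 1 t 0 1"
  and lower_unip_mat22: "lower_unip t = mat22 1 0 t 1"
  by (simp_all add: upper_unip_def lower_unip_def E12_def E21_def mat22_one)

lemma E12_square: "E12 ** E12 = 0"
  by (simp add: E12_def mat22_zero)

lemma upper_unip_add: "upper_unip s ** upper_unip t = upper_unip (s + t)"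
  by (simp add: upper_unip_def one_plus_nilpotent_mult E12_square)

lemma upper_unip_zero: "upper_unip 0 = mat 1"
  by (simp add: upper_unip_def)

lemma matrix_inv_upper_unip: "matrix_inv (upper_unip t) = upper_unip (- t)"
  by (simp add: upper_unip_def matrix_inv_one_plus_nilpotent E12_square)

lemma det_upper_unip [simp]: "det (upper_unip t) = 1"
  and det_lower_unip [simp]: "det (lower_unip t) = 1"
  by (simp_all add: upper_unip_mat22 lower_unip_mat22)

lemma upper_unip_eq_one_iff: "upper_unip t = mat 1 \<longleftrightarrow> t = 0"
  by (simp add: upper_unip_mat22 mat22_one)

lemma scalar_if_commutes_with_unip:
  assumes "K ** upper_unip 1 = upper_unip 1 ** K" "K ** lower_unip 1 = lower_unip 1 ** K"
  shows "K = K$1$1 *\<^sub>R mat 1"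
  using assms by (cases K rule: mat22_cases) (simp add: upper_unip_mat22 lower_unip_mat22 mat22_one)

lemma SL2_lower_upper_decomposition:
  assumes "det s = 1"
  shows "\<exists>x y z u v. s = lower_unip x ** upper_unip y ** lower_unip z ** upper_unip u ** lower_unip v"
proof -
  obtain a b c d where s: "s = mat22 a b c d"
    by (rule mat22_cases)
  then have det: "a * d - b * c = 1"
    using assms by simp
  show ?thesis
  proof (cases "c = 0")
    case False
    have "s = lower_unip 0 ** upper_unip ((a - 1)/c) ** lower_unip c ** upper_unip ((d - 1)/c)
        ** lower_unip 0"
      using False det by (simp add: s upper_unip_mat22 lower_unip_mat22 field_simps)
    then show ?thesis
      by blast
  next
    case True
    then have "a \<noteq> 0"
      using det by auto
    have "s = lower_unip (-1) ** upper_unip ((a - 1)/a) ** lower_unip a ** upper_unip ((b + d - 1)/a)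
        ** lower_unip 0"
      using True \<open>a \<noteq> 0\<close> det by (simp add: s upper_unip_mat22 lower_unip_mat22 field_simps)
    then show ?thesis
      by blast
  qed
qed

lemma trace_one_plus_one_minus_one_plus:
  fixes A B :: "real^2^2"
  assumes "trace A = 0" "trace B = 0" "A ** A = 0"
  shows "trace ((mat 1 + A) ** (mat 1 - B) ** (mat 1 + A)) = 2 - 2 * trace (A ** B)"
proof -
  obtain a1 a2 a3 a4 where A: "A = mat22 a1 a2 a3 a4" by (rule mat22_cases)
  obtain b1 b2 b3 b4 where B: "B = mat22 b1 b2 b3 b4" by (rule mat22_cases)
  have "a1 + a4 = 0" "b1 + b4 = 0" "a1 * a1 + a2 * a3 = 0" "a1 * a2 + a2 * a4 = 0"
    "a3 * a1 + a4 * a3 = 0" "a3 * a2 + a4 * a4 = 0"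
    using assms by (simp_all add: A B mat22_zero)
  then show ?thesis
    by (simp add: A B mat22_one) algebra
qed

text \<open>The columns of \<open>P\<close> are \<open>A v\<close> and \<open>v\<close> for a nonzero vector \<open>v\<close> in the kernel of \<open>B\<close>.\<close>
lemma ex_intertwiner_E12_E21:
  fixes A B :: "real^2^2"
  assumes "trace A = 0" "trace B = 0" "A ** A = 0" "B ** B = 0" "trace (A ** B) = 1"
  shows "\<exists>P. invertible P \<and> P ** E12 = A ** P \<and> P ** E21 = B ** P"
proof -
  obtain a1 a2 a3 a4 where A: "A = mat22 a1 a2 a3 a4" by (rule mat22_cases)
  obtain b1 b2 b3 b4 where B: "B = mat22 b1 b2 b3 b4" by (rule mat22_cases)
  have h: "a1 + a4 = 0" "b1 + b4 = 0" "a1 * a1 + a2 * a3 = 0" "a1 * a2 + a2 * a4 = 0"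
    "a3 * a1 + a4 * a3 = 0" "a3 * a2 + a4 * a4 = 0" "b1 * b1 + b2 * b3 = 0" "b1 * b2 + b2 * b4 = 0"
    "b3 * b1 + b4 * b3 = 0" "b3 * b2 + b4 * b4 = 0" "a1 * b1 + a2 * b3 + (a3 * b2 + a4 * b4) = 1"
    using assms by (simp_all add: A B mat22_zero algebra_simps)
  define P where "P v1 v2 = mat22 (a1 * v1 + a2 * v2) v1 (a3 * v1 + a4 * v2) v2" for v1 v2
  show ?thesis
  proof (cases "b1 = 0 \<and> b2 = 0")
    case False
    have "det (P b2 (- b1)) = 0 \<Longrightarrow> b1 = 0" "det (P b2 (- b1)) = 0 \<Longrightarrow> b2 = 0"
      using h by (simp_all add: P_def; algebra)+
    moreover have "P b2 (- b1) ** E12 = A ** P b2 (- b1)"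
      using h by (simp add: P_def A E12_def; algebra)
    moreover have "P b2 (- b1) ** E21 = B ** P b2 (- b1)"
      using h by (simp add: P_def B E21_def) (intro conjI; algebra)
    ultimately show ?thesis
      using False by (metis invertible_det_nz)
  next
    case True
    then have "b3 \<noteq> 0"
      using h by auto
    moreover have "det (P (- b4) b3) = 0 \<Longrightarrow> b3 = 0"
      using h True by (simp add: P_def; algebra)
    moreover have "P (- b4) b3 ** E12 = A ** P (- b4) b3"
      using h by (simp add: P_def A E12_def; algebra)
    moreover have "P (- b4) b3 ** E21 = B ** P (- b4) b3"
      using h True by (simp add: P_def B E21_def)
    ultimately show ?thesis
      by (metis invertible_det_nz)
  qed
qed

definition J :: "real^2^2" where
  "J = mat22 0 1 (-1) 0"

lemma det_J [simp]: "det J = 1"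
  by (simp add: J_def)

lemma J_square: "J ** J = - mat 1"
  by (simp add: J_def mat22_one)

lemma J_eq_unip_product: "J = upper_unip 1 ** lower_unip (-1) ** upper_unip 1"
  by (simp add: J_def upper_unip_mat22 lower_unip_mat22)

lemma J_conj_upper_unip: "J ** upper_unip (- t) ** matrix_inv J = lower_unip t"
  by (simp add: J_def upper_unip_mat22 lower_unip_mat22 matrix_inv_mat22)

section \<open>Twisted conjugacy classes\<close>

definition trace_det_ratio :: "real^2^2 \<Rightarrow> real" where
  "trace_det_ratio x = (trace x)\<^sup>2 / det x"

lemma trace_det_ratio_conj:
  "invertible g \<Longrightarrow> trace_det_ratio (g ** x ** matrix_inv g) = trace_det_ratio x"
  by (simp add: trace_det_ratio_def det_conj trace_conj)

lemma trace_det_ratio_scaleR: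
  assumes "c \<noteq> 0"
  shows "trace_det_ratio (c *\<^sub>R x) = trace_det_ratio x"
  using assms by (simp add: trace_det_ratio_def trace_scaleR det_scaleR_22 power_mult_distrib)

lemma infinite_quotient_if_invariant:
  assumes refl: "\<And>x. x \<in> A \<Longrightarrow> (x, x) \<in> r"
    and invariant: "\<And>x y. (x, y) \<in> r \<Longrightarrow> f x = f y"
    and "infinite (f ` A)"
  shows "infinite (A // r)"
proof
  assume "finite (A // r)"
  moreover have "finite (f ` C)" if C: "C \<in> A // r" for C
  proof -
    obtain x where "C = r `` {x}"
      using C by (auto simp: quotient_def)
    then have "f ` C \<subseteq> {f x}"
      using invariant by auto
    then show ?thesis
      using finite_subset by blast
  qed
  ultimately have "finite (\<Union>C\<in>A // r. f ` C)"
    by blast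
  moreover have "f ` A \<subseteq> (\<Union>C\<in>A // r. f ` C)"
    using refl by (fastforce simp: quotient_def)
  ultimately show False
    using assms(3) finite_subset by blast
qed

text \<open>If \<open>\<phi> g = c P g P\<^sup>-\<^sup>1\<close>, twisted conjugation \<open>x \<mapsto> g x \<phi>(g)\<^sup>-\<^sup>1\<close> becomes, after right
  multiplication by \<open>P\<close>, ordinary conjugation by \<open>g\<close> up to a scalar; hence
  \<open>trace_det_ratio (x P)\<close> is constant on twisted classes, and it is unbounded on \<open>SL2\<close>.\<close>
lemma R_infinite_if_projective_conj:
  assumes "SL2 \<subseteq> G" "G \<subseteq> GL2" "invertible P" "\<phi> (mat 1) = mat 1"
    and proj: "\<And>g. g \<in> G \<Longrightarrow> \<exists>c. c \<noteq> 0 \<and> \<phi> g = c *\<^sub>R (P ** g ** matrix_inv P)"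
  shows "R_infinite G \<phi>"
  unfolding R_infinite_def
proof (rule infinite_quotient_if_invariant)
  let ?f = "\<lambda>x. trace_det_ratio (x ** P)"
  have "mat 1 \<in> G"
    using assms(1) by (auto simp: SL2_def)
  then show "(x, x) \<in> twisted_rel G \<phi>" if "x \<in> G" for x
    using that assms(4) unfolding twisted_rel_def by (auto intro!: bexI[of _ "mat 1"] simp: matrix_inv_one)
  show "?f x = ?f y" if xy: "(x, y) \<in> twisted_rel G \<phi>" for x y
  proof -
    obtain g where g: "g \<in> G" "y = g ** x ** matrix_inv (\<phi> g)"
      using xy by (auto simp: twisted_rel_def)
    obtain c where c: "c \<noteq> 0" "\<phi> g = c *\<^sub>R (P ** g ** matrix_inv P)"
      using proj[OF g(1)] by blast
    have "invertible g"
      using assms(2) g(1) by (auto simp: GL2_def)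
    then have "matrix_inv (\<phi> g) = inverse c *\<^sub>R (P ** matrix_inv g ** matrix_inv P)"
      using assms(3) c by (simp add: matrix_inv_scaleR matrix_inv_conj invertible_mult
          invertible_matrix_inv)
    moreover have cancel: "M ** matrix_inv P ** P = M" for M
      by (metis assms(3) matrix_inv_left matrix_mul_assoc matrix_mul_rid)
    ultimately have "y ** P = inverse c *\<^sub>R (g ** (x ** P) ** matrix_inv g)"
      by (simp add: g(2) cancel matrix_scaleR_left matrix_scaleR_right matrix_mul_assoc)
    then show ?thesis
      using c(1) \<open>invertible g\<close> by (simp add: trace_det_ratio_scaleR trace_det_ratio_conj)
  qed
  show "infinite (?f ` G)"
  proof -
    define x where "x n = mat22 (real n) (- det P) 1 0 ** matrix_inv P" for n :: nat
    have xP: "x n ** P = mat22 (real n) (- det P) 1 0" for n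
      using assms(3) by (simp add: x_def matrix_inv_left flip: matrix_mul_assoc)
    have "det P \<noteq> 0"
      using assms(3) invertible_det_nz by blast
    moreover have "det (x n) * det P = det P" for n
      using arg_cong[OF xP[of n], of det] by (simp add: det_mul)
    ultimately have "det (x n) = 1" for n
      by simp
    then have "x n \<in> G" for n
      using assms(1) by (auto simp: SL2_def)
    moreover have "?f (x n) = (real n)\<^sup>2 / det P" for n
      by (simp add: xP trace_det_ratio_def)
    ultimately have "(real n)\<^sup>2 / det P \<in> ?f ` G" for n
      by (metis image_eqI)
    then have "range (\<lambda>n. (real n)\<^sup>2 / det P) \<subseteq> ?f ` G"
      by auto
    moreover have "inj (\<lambda>n. (real n)\<^sup>2 / det P)"
      using \<open>det P \<noteq> 0\<close> by (intro injI) (simp add: power2_eq_iff_nonneg)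
    ultimately show ?thesis
      using range_inj_infinite finite_subset by blast
  qed
qed

section \<open>Continuous automorphisms between SL2 and GL2\<close>

locale top_aut_between_SL2_GL2 =
  fixes G :: "(real^2^2) set" and \<phi> :: "real^2^2 \<Rightarrow> real^2^2"
  assumes SL2_subset: "SL2 \<subseteq> G" and subset_GL2: "G \<subseteq> GL2"
    and mult_closed: "\<And>x y. x \<in> G \<Longrightarrow> y \<in> G \<Longrightarrow> x ** y \<in> G"
    and matrix_inv_closed: "\<And>x. x \<in> G \<Longrightarrow> matrix_inv x \<in> G"
    and top_aut: "top_automorphism G \<phi>"
begin

lemma phi_mult: "x \<in> G \<Longrightarrow> y \<in> G \<Longrightarrow> \<phi> (x ** y) = \<phi> x ** \<phi> y"
  using top_aut unfolding top_automorphism_def by blast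

lemma phi_homeomorphism: obtains \<psi> where "homeomorphism G G \<phi> \<psi>"
  using top_aut unfolding top_automorphism_def by blast

lemma phi_image: "\<phi> ` G = G"
  by (metis phi_homeomorphism homeomorphism_def)

lemma phi_in: "x \<in> G \<Longrightarrow> \<phi> x \<in> G"
  using phi_image by blast

lemma continuous_on_phi: "continuous_on G \<phi>"
  by (metis phi_homeomorphism homeomorphism_def)

lemma inj_on_phi: "inj_on \<phi> G"
  by (metis phi_homeomorphism homeomorphism_def inj_on_inverseI)

lemma invertible_if_in: "x \<in> G \<Longrightarrow> invertible x"
  using subset_GL2 by (auto simp: GL2_def)

lemma in_if_det_eq_1: "det x = 1 \<Longrightarrow> x \<in> G"
  using SL2_subset by (auto simp: SL2_def)

lemma phi_one: "\<phi> (mat 1) = mat 1"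
proof -
  have one: "mat 1 \<in> G"
    by (simp add: in_if_det_eq_1)
  then have "\<phi> (mat 1) ** \<phi> (mat 1) = \<phi> (mat 1) ** mat 1"
    by (simp flip: phi_mult)
  then show ?thesis
    using matrix_inv_left[OF invertible_if_in[OF phi_in[OF one]]]
    by (metis matrix_mul_assoc matrix_mul_lid)
qed

lemma phi_matrix_inv: "x \<in> G \<Longrightarrow> \<phi> (matrix_inv x) = matrix_inv (\<phi> x)"
  by (rule matrix_inv_unique[symmetric])
    (simp_all flip: phi_mult add: matrix_inv_closed matrix_inv_left matrix_inv_right
      invertible_if_in phi_one)

lemma phi_conj:
  "g \<in> G \<Longrightarrow> x \<in> G \<Longrightarrow> \<phi> (g ** x ** matrix_inv g) = \<phi> g ** \<phi> x ** matrix_inv (\<phi> g)"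
  by (simp add: phi_mult mult_closed matrix_inv_closed phi_matrix_inv)

lemma phi_eq_one_iff: "x \<in> G \<Longrightarrow> \<phi> x = mat 1 \<longleftrightarrow> x = mat 1"
  using inj_on_phi phi_one in_if_det_eq_1[of "mat 1"] by (metis det_I inj_onD)

lemma phi_neg_one: "\<phi> (- mat 1) = - mat 1"
proof -
  let ?N = "- mat 1 :: real^2^2"
  have N: "?N \<in> G"
    by (simp add: in_if_det_eq_1 mat22_one)
  have "\<phi> ?N ** y = y ** \<phi> ?N" if y: "y \<in> G" for y
  proof -
    obtain x where x: "x \<in> G" "y = \<phi> x"
      using y phi_image by blast
    have "?N ** x = x ** ?N"
      by (simp add: matrix_neg_left matrix_neg_right)
    then show ?thesis
      using x N by (metis phi_mult)
  qed
  then obtain k where k: "\<phi> ?N = k *\<^sub>R mat 1"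
    using scalar_if_commutes_with_unip in_if_det_eq_1 det_upper_unip det_lower_unip by metis
  have "?N ** ?N = mat 1"
    by (simp add: matrix_neg_left matrix_neg_right)
  then have "(k * k) *\<^sub>R mat 1 = (mat 1 :: real^2^2)"
    using phi_mult[OF N N] phi_one k by (simp add: matrix_scaleR_left matrix_scaleR_right)
  then have "k = 1 \<or> k = -1"
    by (simp add: mat22_one square_eq_1_iff)
  moreover have "k \<noteq> 1"
    using k phi_eq_one_iff[OF N] by (auto simp: mat22_one)
  ultimately show ?thesis
    using k by simp
qed

lemma phi_upper_unip_mult: "\<phi> (upper_unip s) ** \<phi> (upper_unip t) = \<phi> (upper_unip (s + t))"
  by (simp add: in_if_det_eq_1 upper_unip_add flip: phi_mult)

lemma unipotent_phi_upper_unip_1: "unipotent (\<phi> (upper_unip 1))"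
proof -
  let ?x = "\<phi> (upper_unip 1)"
  let ?D = "mat22 2 0 0 (1/2)"
  have D: "?D \<in> G"
    by (simp add: in_if_det_eq_1)
  have "?D ** upper_unip 1 ** matrix_inv ?D = upper_unip 4"
    by (simp add: upper_unip_mat22 matrix_inv_mat22)
  then have "\<phi> ?D ** ?x ** matrix_inv (\<phi> ?D) = ?x ** ?x ** ?x ** ?x"
    using phi_conj[OF D, of "upper_unip 1"] by (simp add: in_if_det_eq_1 phi_upper_unip_mult)
  moreover have "?x ** ?x ** ?x \<noteq> mat 1" "?x ** ?x ** ?x ** ?x ** ?x \<noteq> mat 1"
    by (simp_all add: phi_upper_unip_mult phi_eq_one_iff in_if_det_eq_1 upper_unip_eq_one_iff)
  ultimately show ?thesis
    using unipotent_if_conj_to_fourth_power invertible_if_in phi_in in_if_det_eq_1 D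
    by (metis det_upper_unip)
qed

definition dphi_E12 :: "real^2^2" where
  "dphi_E12 = \<phi> (upper_unip 1) - mat 1"

lemma trace_dphi_E12: "trace dphi_E12 = 0"
  and dphi_E12_square: "dphi_E12 ** dphi_E12 = 0"
  using unipotent_phi_upper_unip_1 by (simp_all add: dphi_E12_def unipotent_iff_nilpotent)

lemma dphi_E12_nonzero: "dphi_E12 \<noteq> 0"
  by (simp add: dphi_E12_def phi_eq_one_iff in_if_det_eq_1 upper_unip_eq_one_iff)

lemma phi_upper_unip_on_line: "\<exists>l. \<phi> (upper_unip t) = mat 1 + l *\<^sub>R dphi_E12"
proof -
  have pos: "\<exists>l. \<phi> (upper_unip t) = mat 1 + l *\<^sub>R dphi_E12" if t: "t > 0" for t
  proof -
    let ?E = "mat22 (sqrt t) 0 0 (1 / sqrt t)"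
    have E: "?E \<in> G"
      using t by (simp add: in_if_det_eq_1)
    have "?E ** upper_unip 1 ** matrix_inv ?E = upper_unip t"
      using t by (simp add: upper_unip_mat22 matrix_inv_mat22)
    then have "\<phi> (upper_unip t) = \<phi> ?E ** \<phi> (upper_unip 1) ** matrix_inv (\<phi> ?E)"
      using phi_conj[OF E, of "upper_unip 1"] by (simp add: in_if_det_eq_1)
    then have "unipotent (\<phi> (upper_unip t))"
      using unipotent_conj invertible_if_in phi_in E unipotent_phi_upper_unip_1 by simp
    moreover have "\<phi> (upper_unip t) ** dphi_E12 = dphi_E12 ** \<phi> (upper_unip t)"
      by (simp add: dphi_E12_def matrix_diff_ldistrib matrix_diff_rdistrib phi_upper_unip_mult
          add.commute)
    ultimately show ?thesis
      using unipotent_commuting_eq_one_plus_scaleR trace_dphi_E12 dphi_E12_nonzero by blast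
  qed
  consider "t > 0" | "t = 0" | "t < 0"
    by linarith
  then show ?thesis
  proof cases
    case 1
    then show ?thesis
      by (rule pos)
  next
    case 2
    then have "\<phi> (upper_unip t) = mat 1 + 0 *\<^sub>R dphi_E12"
      by (simp add: upper_unip_zero phi_one)
    then show ?thesis ..
  next
    case 3
    then obtain l where l: "\<phi> (upper_unip (- t)) = mat 1 + l *\<^sub>R dphi_E12"
      using pos by force
    have "\<phi> (upper_unip t) = matrix_inv (\<phi> (upper_unip (- t)))"
      using phi_matrix_inv[of "upper_unip (- t)"] by (simp add: matrix_inv_upper_unip in_if_det_eq_1)
    also have "\<dots> = mat 1 + (- l) *\<^sub>R dphi_E12"
      using l matrix_inv_one_plus_nilpotent dphi_E12_square by simp
    finally show ?thesis ..
  qed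
qed

lemma continuous_on_phi_upper_unip: "continuous_on UNIV (\<lambda>t. \<phi> (upper_unip t))"
proof (rule continuous_on_compose2[OF continuous_on_phi])
  show "continuous_on UNIV upper_unip"
    unfolding upper_unip_def by (intro continuous_intros)
qed (auto simp: in_if_det_eq_1)

text \<open>The coefficient \<open>L t\<close> is additive and continuous in \<open>t\<close>, hence linear.\<close>
lemma phi_upper_unip: "\<phi> (upper_unip t) = mat 1 + t *\<^sub>R dphi_E12"
proof -
  obtain L where L: "\<And>t. \<phi> (upper_unip t) = mat 1 + L t *\<^sub>R dphi_E12"
    using phi_upper_unip_on_line by metis
  have coeff_eq: "a = b" if "mat 1 + a *\<^sub>R dphi_E12 = mat 1 + b *\<^sub>R dphi_E12" for a b
    using that dphi_E12_nonzero by (simp add: scaleR_cancel_right)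
  have add: "L (s + t) = L s + L t" for s t
    by (rule coeff_eq) (metis L phi_upper_unip_mult one_plus_nilpotent_mult dphi_E12_square)
  have "L 1 = 1"
    by (rule coeff_eq) (simp add: flip: L, simp add: dphi_E12_def)
  obtain i j where ij: "dphi_E12 $ i $ j \<noteq> 0"
    using dphi_E12_nonzero by (metis vec_eq_iff zero_index)
  have "L = (\<lambda>t. (\<phi> (upper_unip t) $ i $ j - mat 1 $ i $ j) / dphi_E12 $ i $ j)"
    using ij by (simp add: L)
  moreover have "continuous_on UNIV (\<lambda>t. (\<phi> (upper_unip t) $ i $ j - mat 1 $ i $ j) / dphi_E12 $ i $ j)"
    using ij continuous_on_phi_upper_unip by (intro continuous_intros) auto
  ultimately have "continuous_on UNIV L"
    by simp
  then show ?thesis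
    using continuous_additive_eq_scale[OF add] \<open>L 1 = 1\<close> L by simp
qed

definition dphi_E21 :: "real^2^2" where
  "dphi_E21 = - (\<phi> J ** dphi_E12 ** matrix_inv (\<phi> J))"

lemma phi_lower_unip: "\<phi> (lower_unip t) = mat 1 + t *\<^sub>R dphi_E21"
proof -
  have J: "J \<in> G"
    by (simp add: in_if_det_eq_1)
  have "\<phi> (lower_unip t) = \<phi> J ** \<phi> (upper_unip (- t)) ** matrix_inv (\<phi> J)"
    using phi_conj[OF J, of "upper_unip (- t)"] by (simp add: J_conj_upper_unip in_if_det_eq_1)
  also have "\<dots> = mat 1 + (- t) *\<^sub>R (\<phi> J ** dphi_E12 ** matrix_inv (\<phi> J))"
    by (simp only: phi_upper_unip conj_one_plus_scaleR[OF invertible_if_in[OF phi_in[OF J]]])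
  finally show ?thesis
    by (simp add: dphi_E21_def)
qed

lemma trace_dphi_E21: "trace dphi_E21 = 0"
  and dphi_E21_square: "dphi_E21 ** dphi_E21 = 0"
proof -
  let ?Y = "\<phi> J"
  have Y: "invertible ?Y"
    by (simp add: invertible_if_in phi_in in_if_det_eq_1)
  show "trace dphi_E21 = 0"
    using trace_dphi_E12 by (simp add: dphi_E21_def trace_uminus trace_conj[OF Y])
  have cancel: "M ** matrix_inv ?Y ** ?Y = M" for M
    by (metis Y matrix_inv_left matrix_mul_assoc matrix_mul_rid)
  have "dphi_E21 ** dphi_E21 = ?Y ** (dphi_E12 ** dphi_E12) ** matrix_inv ?Y"
    by (simp add: dphi_E21_def cancel matrix_neg_left matrix_neg_right matrix_mul_assoc)
  then show "dphi_E21 ** dphi_E21 = 0"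
    by (simp add: dphi_E12_square)
qed

lemma trace_dphi_E12_dphi_E21: "trace (dphi_E12 ** dphi_E21) = 1"
proof -
  have J: "J \<in> G"
    by (simp add: in_if_det_eq_1)
  have "\<phi> J = (mat 1 + dphi_E12) ** (mat 1 - dphi_E21) ** (mat 1 + dphi_E12)"
    by (simp add: J_eq_unip_product phi_mult mult_closed in_if_det_eq_1 phi_upper_unip phi_lower_unip)
  moreover have "\<phi> J ** \<phi> J = - mat 1"
    using phi_mult[OF J J] by (simp add: J_square phi_neg_one)
  ultimately have "trace ((mat 1 + dphi_E12) ** (mat 1 - dphi_E21) ** (mat 1 + dphi_E12)) = 0"
    using traceless_if_square_eq_neg_one by simp
  then show ?thesis
    using trace_one_plus_one_minus_one_plus[OF trace_dphi_E12 trace_dphi_E21 dphi_E12_square]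
    by simp
qed

lemma ex_intertwiner_on_SL2: "\<exists>P. invertible P \<and> (\<forall>s. det s = 1 \<longrightarrow> \<phi> s ** P = P ** s)"
proof -
  obtain P where P: "invertible P" "P ** E12 = dphi_E12 ** P" "P ** E21 = dphi_E21 ** P"
    using ex_intertwiner_E12_E21[OF trace_dphi_E12 trace_dphi_E21 dphi_E12_square
        dphi_E21_square trace_dphi_E12_dphi_E21] by blast
  define Q where "Q s \<longleftrightarrow> \<phi> s ** P = P ** s" for s
  have upper: "Q (upper_unip t)" and lower: "Q (lower_unip t)" for t
    using P(2,3) unfolding Q_def phi_upper_unip phi_lower_unip
    by (simp_all add: upper_unip_def lower_unip_def matrix_add_ldistrib matrix_add_rdistrib
        matrix_scaleR_left matrix_scaleR_right)
  have mult: "Q (x ** y)" if "x \<in> G" "y \<in> G" "Q x" "Q y" for x y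
    using that by (simp add: Q_def phi_mult flip: matrix_mul_assoc) (simp add: matrix_mul_assoc)
  have "Q s" if "det s = 1" for s
    using SL2_lower_upper_decomposition[OF that]
    by (auto intro!: mult upper lower mult_closed in_if_det_eq_1 simp: det_mul)
  then show ?thesis
    using P(1) by (auto simp: Q_def)
qed

text \<open>With \<open>\<psi> x = P\<^sup>-\<^sup>1 \<phi>(x) P\<close>, which is the identity on \<open>SL2\<close>, one gets
  \<open>\<psi>(g) s = \<psi>(g s g\<^sup>-\<^sup>1) \<psi>(g) = g s g\<^sup>-\<^sup>1 \<psi>(g)\<close>; so \<open>g\<^sup>-\<^sup>1 \<psi>(g)\<close> centralizes \<open>SL2\<close>
  and is a scalar.\<close>
lemma phi_projective_if_fixes_SL2:
  assumes P: "invertible P" "\<And>s. det s = 1 \<Longrightarrow> \<phi> s ** P = P ** s" and g: "g \<in> G"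
  shows "\<exists>c. c \<noteq> 0 \<and> \<phi> g = c *\<^sub>R (P ** g ** matrix_inv P)"
proof -
  define \<psi> where "\<psi> x = matrix_inv P ** \<phi> x ** P" for x
  have cancel: "M ** P ** matrix_inv P = M" "M ** matrix_inv g ** g = M" for M
    using P(1) invertible_if_in[OF g]
    by (metis matrix_inv_left matrix_inv_right matrix_mul_assoc matrix_mul_rid)+
  have \<psi>_mult: "\<psi> (x ** y) = \<psi> x ** \<psi> y" if "x \<in> G" "y \<in> G" for x y
    using that by (simp add: \<psi>_def phi_mult cancel matrix_mul_assoc)
  have \<psi>_SL2: "\<psi> s = s" if "det s = 1" for s
  proof -
    have "\<psi> s = matrix_inv P ** (\<phi> s ** P)"
      by (simp add: \<psi>_def matrix_mul_assoc)
    also have "\<dots> = s"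
      using P(2)[OF that] matrix_inv_left[OF P(1)] by (simp add: matrix_mul_assoc)
    finally show ?thesis .
  qed
  define K where "K = matrix_inv g ** \<psi> g"
  have "K ** s = s ** K" if s: "det s = 1" for s
  proof -
    let ?h = "g ** s ** matrix_inv g"
    have h: "det ?h = 1"
      using s det_conj[OF invertible_if_in[OF g]] by simp
    have "\<psi> g ** s = \<psi> (?h ** g)"
      using g s by (simp add: \<psi>_mult \<psi>_SL2 in_if_det_eq_1 cancel)
    also have "\<dots> = ?h ** \<psi> g"
      using g h by (simp add: \<psi>_mult \<psi>_SL2 in_if_det_eq_1)
    finally have "\<psi> g ** s = g ** (s ** K)"
      by (simp add: K_def matrix_mul_assoc)
    then have "matrix_inv g ** (\<psi> g ** s) = s ** K"
      using matrix_inv_left[OF invertible_if_in[OF g]] by (metis matrix_mul_assoc matrix_mul_lid)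
    then show ?thesis
      by (simp add: K_def matrix_mul_assoc)
  qed
  then have "K = K$1$1 *\<^sub>R mat 1"
    by (intro scalar_if_commutes_with_unip) simp_all
  then have "\<psi> g = K$1$1 *\<^sub>R g"
    using K_def matrix_inv_right[OF invertible_if_in[OF g]]
    by (metis matrix_mul_assoc matrix_mul_lid matrix_scaleR_right matrix_mul_rid)
  moreover have "\<phi> g = P ** \<psi> g ** matrix_inv P"
    using matrix_inv_right[OF P(1)] by (simp add: \<psi>_def cancel matrix_mul_assoc)
  ultimately have "\<phi> g = K$1$1 *\<^sub>R (P ** g ** matrix_inv P)"
    by (simp add: matrix_scaleR_left matrix_scaleR_right)
  moreover have "\<phi> g \<noteq> 0"
    using invertible_if_in[OF phi_in[OF g]] by (auto simp: invertible_det_nz mat22_zero)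
  ultimately show ?thesis
    by (metis scaleR_zero_left)
qed

lemma R_infinite: "R_infinite G \<phi>"
proof -
  obtain P where "invertible P" "\<And>s. det s = 1 \<Longrightarrow> \<phi> s ** P = P ** s"
    using ex_intertwiner_on_SL2 by blast
  then show ?thesis
    using R_infinite_if_projective_conj[OF SL2_subset subset_GL2] phi_one phi_projective_if_fixes_SL2
    by blast
qed

end

lemma top_R_infty_property_if_between_SL2_GL2:
  assumes "SL2 \<subseteq> G" "G \<subseteq> GL2"
    and "\<And>x y. x \<in> G \<Longrightarrow> y \<in> G \<Longrightarrow> x ** y \<in> G" "\<And>x. x \<in> G \<Longrightarrow> matrix_inv x \<in> G"
  shows "top_R_infty_property G"
  unfolding top_R_infty_property_def
  using top_aut_between_SL2_GL2.R_infinite[OF top_aut_between_SL2_GL2.intro[OF assms]] by blast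

theorem theorem5p7:
  shows "top_R_infty_property SL2 \<and> top_R_infty_property GL2"
proof
  show "top_R_infty_property SL2"
  proof (rule top_R_infty_property_if_between_SL2_GL2)
    show "matrix_inv x \<in> SL2" if "x \<in> SL2" for x
      using that det_matrix_inv[of x] by (simp add: SL2_def invertible_det_nz)
  qed (auto simp: SL2_def GL2_def det_mul invertible_det_nz)
  show "top_R_infty_property GL2"
    by (rule top_R_infty_property_if_between_SL2_GL2)
      (auto simp: SL2_def GL2_def invertible_mult invertible_matrix_inv, simp add: invertible_det_nz)
qed

end
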